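(* Let $A\subset C(X)$ be a uniform algebra, let $\theta : A\to M_n(\mathbb{C})$ be a continuous unital homomorphism, and let $\alpha : A\to A$ be a unital antilinear contraction. Suppose that $$\theta_\alpha(f):=\tfrac12\bigl(\theta(f)+\theta(\alpha(f))^*\bigr)$$ satisfies $\|\theta_\alpha\|\le 1$. If $p\in A$ is a self-adjoint projection, meaning $p^2=p$ and $\overline{p}=p$, then $\theta(p)$ is a self-adjoint projection in $M_n(\mathbb{C})$.
   Context: A uniform algebra is a norm-closed subalgebra of $C(X)$, for $X$ a compact Hausdorff space, containing the constants, with the supremum norm. A map $\alpha$ is antilinear if $\alpha(\lambda f+g)=\overline\lambda\alpha(f)+\alpha(g)$. It is a contraction if $\|\alpha(f)\|\le\|f\|$, and it is unital if $\alpha(1)=1$. $M_n(\mathbb{C})$ carries the operator norm. *)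

theory Defs
  imports "HOL-Analysis.Analysis"
begin

text \<open>C(X) for X a compact Hausdorff space is modelled as the continuous functions
  on a type 'a of class t2_space whose universe is compact.\<close>

definition supnorm :: "('a \<Rightarrow> complex) \<Rightarrow> real" where
  "supnorm f = (SUP x. cmod (f x))"

definition uniform_algebra :: "('a::t2_space \<Rightarrow> complex) set \<Rightarrow> bool" where
  "uniform_algebra A \<longleftrightarrow>
     compact (UNIV :: 'a set) \<and>
     (\<forall>f\<in>A. continuous_on UNIV f) \<and>
     (\<forall>c. (\<lambda>x. c) \<in> A) \<and>
     (\<forall>f\<in>A. \<forall>g\<in>A. (\<lambda>x. f x + g x) \<in> A) \<and>
     (\<forall>c. \<forall>f\<in>A. (\<lambda>x. c * f x) \<in> A) \<and>
     (\<forall>f\<in>A. \<forall>g\<in>A. (\<lambda>x. f x * g x) \<in> A) \<and>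
     (\<forall>F f. (\<forall>k. F k \<in> A) \<and> continuous_on UNIV f \<and>
            (\<lambda>k. supnorm (\<lambda>x. F k x - f x)) \<longlonglongrightarrow> 0 \<longrightarrow> f \<in> A)"

definition mat_opnorm :: "complex^'n^'n \<Rightarrow> real" where
  "mat_opnorm M = onorm (\<lambda>v. M *v v)"

definition mat_adj :: "complex^'n^'n \<Rightarrow> complex^'n^'n" where
  "mat_adj M = (\<chi> i j. cnj (M $ j $ i))"

definition mat_cscale :: "complex \<Rightarrow> complex^'n^'n \<Rightarrow> complex^'n^'n" where
  "mat_cscale c M = (\<chi> i j. c * M $ i $ j)"

definition continuous_unital_hom ::
    "('a \<Rightarrow> complex) set \<Rightarrow> (('a \<Rightarrow> complex) \<Rightarrow> complex^'n^'n) \<Rightarrow> bool" where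
  "continuous_unital_hom A \<theta> \<longleftrightarrow>
     (\<forall>f\<in>A. \<forall>g\<in>A. \<theta> (\<lambda>x. f x + g x) = \<theta> f + \<theta> g) \<and>
     (\<forall>c. \<forall>f\<in>A. \<theta> (\<lambda>x. c * f x) = mat_cscale c (\<theta> f)) \<and>
     (\<forall>f\<in>A. \<forall>g\<in>A. \<theta> (\<lambda>x. f x * g x) = \<theta> f ** \<theta> g) \<and>
     \<theta> (\<lambda>x. 1) = mat 1 \<and>
     (\<forall>f\<in>A. \<forall>e>0. \<exists>d>0. \<forall>g\<in>A. supnorm (\<lambda>x. g x - f x) < d \<longrightarrow>
          mat_opnorm (\<theta> g - \<theta> f) < e)"

definition unital_antilinear_contraction ::
    "('a \<Rightarrow> complex) set \<Rightarrow> (('a \<Rightarrow> complex) \<Rightarrow> ('a \<Rightarrow> complex)) \<Rightarrow> bool" where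
  "unital_antilinear_contraction A \<alpha> \<longleftrightarrow>
     (\<forall>f\<in>A. \<alpha> f \<in> A) \<and>
     (\<forall>c. \<forall>f\<in>A. \<forall>g\<in>A. \<alpha> (\<lambda>x. c * f x + g x) = (\<lambda>x. cnj c * \<alpha> f x + \<alpha> g x)) \<and>
     (\<forall>f\<in>A. supnorm (\<alpha> f) \<le> supnorm f) \<and>
     \<alpha> (\<lambda>x. 1) = (\<lambda>x. 1)"

definition theta_alpha ::
    "(('a \<Rightarrow> complex) \<Rightarrow> complex^'n^'n) \<Rightarrow> (('a \<Rightarrow> complex) \<Rightarrow> ('a \<Rightarrow> complex))
     \<Rightarrow> ('a \<Rightarrow> complex) \<Rightarrow> complex^'n^'n" where
  "theta_alpha \<theta> \<alpha> f = mat_cscale (1/2) (\<theta> f + mat_adj (\<theta> (\<alpha> f)))"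

end

theory Submission
  imports Defs
begin

text \<open>
  Write \<open>P = \<theta> p\<close> and \<open>R = \<theta> (\<alpha> p)\<close>, so that \<open>P\<close> is idempotent and commutes with \<open>R\<close>.
  Since \<open>p\<close> only takes the values 0 and 1, the function \<open>2 p + (i s - 1)\<close> has sup norm
  \<open>sqrt (1 + s\<^sup>2)\<close>, and its image under \<open>\<theta>\<^sub>\<alpha>\<close> is \<open>G + i s\<close> with \<open>G = P + R\<^sup>* - 1\<close>.
  A matrix with \<open>\<parallel>G + i s\<parallel> \<le> sqrt (1 + s\<^sup>2)\<close> for all real \<open>s\<close> is a hermitian contraction.
  Finally put \<open>D = P - P\<^sup>*\<close>, \<open>E = P + P\<^sup>* - 1\<close> and \<open>K = P - R\<close>: then \<open>G = E - K\<close>, \<open>K\<close>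
  commutes with \<open>D\<close>, \<open>E\<close> anticommutes with \<open>D\<close> and \<open>E\<^sup>2 = 1 + D\<^sup>* D\<close>. Comparing Frobenius
  norms of \<open>G D\<close> and \<open>D G\<close> via the parallelogram law gives \<open>\<parallel>D\<parallel>\<^sup>2 \<ge> \<parallel>E D\<parallel>\<^sup>2 = \<parallel>D\<parallel>\<^sup>2 + \<parallel>D D\<parallel>\<^sup>2\<close>,
  so \<open>D\<^sup>2 = 0\<close>, hence \<open>D\<^sup>* D = 0\<close> and \<open>P\<close> is hermitian.
\<close>

lemma matrix_add_rdistrib: "((A::'a::semiring_1^'n^'m) + B) ** C = A ** C + B ** C"
  by (simp add: vec_eq_iff matrix_matrix_mult_def sum.distrib distrib_right)

lemma matrix_diff_ldistrib: "(A::'a::ring_1^'n^'m) ** (B - C) = A ** B - A ** C"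
  by (simp add: vec_eq_iff matrix_matrix_mult_def sum_subtractf right_diff_distrib)

lemma matrix_diff_rdistrib: "((A::'a::ring_1^'n^'m) - B) ** C = A ** C - B ** C"
  by (simp add: vec_eq_iff matrix_matrix_mult_def sum_subtractf left_diff_distrib)

lemma matrix_minus_left: "(- (A::'a::ring_1^'n^'m)) ** B = - (A ** B)"
  by (simp add: vec_eq_iff matrix_matrix_mult_def sum_negf)

lemma matrix_minus_right: "(A::'a::ring_1^'n^'m) ** (- B) = - (A ** B)"
  by (simp add: vec_eq_iff matrix_matrix_mult_def sum_negf)

lemma matrix_vector_mult_minus: "(- (A::'a::ring_1^'n^'m)) *v x = - (A *v x)"
  by (simp add: vec_eq_iff matrix_vector_mult_def sum_negf)

lemma mat_cscale_mult_vec: "mat_cscale c M *v v = c *s (M *v v)"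
  by (simp add: vec_eq_iff mat_cscale_def matrix_vector_mult_def vector_scalar_mult_def
      sum_distrib_left mult.assoc)

lemma mat_adj_mat_adj [simp]: "mat_adj (mat_adj A) = A"
  by (simp add: mat_adj_def vec_eq_iff)

lemma mat_adj_add: "mat_adj (A + B) = mat_adj A + mat_adj B"
  by (simp add: mat_adj_def vec_eq_iff)

lemma mat_adj_diff: "mat_adj (A - B) = mat_adj A - mat_adj B"
  by (simp add: mat_adj_def vec_eq_iff)

lemma mat_adj_mat_1: "mat_adj (mat 1) = mat 1"
  by (simp add: mat_adj_def vec_eq_iff mat_def)

lemma mat_adj_mult: "mat_adj (A ** B) = mat_adj B ** mat_adj A"
  by (simp add: mat_adj_def vec_eq_iff matrix_matrix_mult_def mult.commute)

lemma inner_complex_eq_Re_cnj: "inner (z::complex) w = Re (z * cnj w)"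
  by (simp add: inner_complex_def)

lemma inner_mat_adj: "inner (M *v u) w = inner u (mat_adj M *v w)"
proof -
  have "inner (M *v u) w = Re (\<Sum>i\<in>UNIV. \<Sum>j\<in>UNIV. M$i$j * u$j * cnj (w$i))"
    by (simp add: inner_vec_def inner_complex_eq_Re_cnj matrix_vector_mult_def sum_distrib_right)
  also have "\<dots> = Re (\<Sum>j\<in>UNIV. \<Sum>i\<in>UNIV. M$i$j * u$j * cnj (w$i))"
    by (subst sum.swap) simp
  also have "\<dots> = inner u (mat_adj M *v w)"
    by (simp add: inner_vec_def inner_complex_eq_Re_cnj matrix_vector_mult_def mat_adj_def
        sum_distrib_left mult_ac)
  finally show ?thesis .
qed

lemma inner_self_mat_mult: "inner (M *v u) (M *v u) = inner u ((mat_adj M ** M) *v u)"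
  by (simp add: inner_mat_adj matrix_vector_mul_assoc)

definition frobenius_sq :: "complex^'n^'n \<Rightarrow> real" where
  "frobenius_sq M = (\<Sum>j\<in>UNIV. inner (M *v axis j 1) (M *v axis j 1))"

lemma matrix_vector_mult_axis: "((M::'a::semiring_1^'n^'m) *v axis j 1) $ i = M$i$j"
  by (simp add: matrix_vector_mult_def axis_def if_distrib cong: if_cong)

lemma frobenius_sq_entries: "frobenius_sq M = (\<Sum>j\<in>UNIV. \<Sum>i\<in>UNIV. inner (M$i$j) (M$i$j))"
  by (simp add: frobenius_sq_def inner_vec_def matrix_vector_mult_axis)

lemma frobenius_sq_mat_adj: "frobenius_sq (mat_adj M) = frobenius_sq M"
  unfolding frobenius_sq_entries by (subst sum.swap) (simp add: mat_adj_def inner_complex_def)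

lemma frobenius_sq_minus: "frobenius_sq (- M) = frobenius_sq M"
  by (simp add: frobenius_sq_def matrix_vector_mult_minus)

lemma frobenius_sq_nonneg: "frobenius_sq M \<ge> 0"
  by (simp add: frobenius_sq_def sum_nonneg)

lemma frobenius_sq_eq_0_iff: "frobenius_sq M = 0 \<longleftrightarrow> M = 0"
proof
  assume "frobenius_sq M = 0"
  then have "\<forall>j\<in>UNIV. inner (M *v axis j 1) (M *v axis j 1) = 0"
    unfolding frobenius_sq_def by (subst sum_nonneg_eq_0_iff[symmetric]) auto
  then have "M *v axis j 1 = 0" for j
    by simp
  then have "M$i$j = 0" for i j
    by (metis matrix_vector_mult_axis zero_index)
  then show "M = 0"
    by (simp add: vec_eq_iff)
qed (simp add: frobenius_sq_def)

lemma frobenius_sq_parallelogram: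
  "frobenius_sq (X + Y) + frobenius_sq (X - Y) = 2 * frobenius_sq X + 2 * frobenius_sq Y"
  by (simp add: frobenius_sq_def matrix_vector_mult_add_rdistrib matrix_vector_mult_diff_rdistrib
      inner_add_left inner_add_right inner_diff_left inner_diff_right inner_commute
      sum.distrib sum_subtractf sum_distrib_left algebra_simps)

lemma frobenius_sq_contraction_mult:
  assumes "\<forall>u. norm (G *v u) \<le> norm u"
  shows "frobenius_sq (G ** M) \<le> frobenius_sq M"
  unfolding frobenius_sq_def
proof (rule sum_mono)
  fix j
  have "(norm (G *v (M *v axis j 1)))\<^sup>2 \<le> (norm (M *v axis j 1))\<^sup>2"
    using assms by (simp add: power_mono)
  then show "inner ((G ** M) *v axis j 1) ((G ** M) *v axis j 1)
      \<le> inner (M *v axis j 1) (M *v axis j 1)"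
    by (simp add: power2_norm_eq_inner matrix_vector_mul_assoc)
qed

lemma skew_eq_0_if_anticommuting_square:
  fixes D E K :: "complex^'n^'n"
  assumes D_skew: "mat_adj D = - D" and E_herm: "mat_adj E = E"
    and EE: "E ** E = mat 1 + mat_adj D ** D" and ED: "E ** D = - (D ** E)"
    and KD: "K ** D = D ** K"
    and G_herm: "mat_adj (E - K) = E - K" and G_contr: "\<forall>u. norm ((E - K) *v u) \<le> norm u"
  shows "D = 0"
proof -
  have GD: "(E - K) ** D = - (D ** E + D ** K)"
    by (simp add: matrix_diff_rdistrib ED KD)
  have DG: "D ** (E - K) = D ** E - D ** K"
    by (rule matrix_diff_ldistrib)
  have "frobenius_sq (D ** (E - K)) = frobenius_sq ((E - K) ** D)"
    by (metis frobenius_sq_mat_adj frobenius_sq_minus mat_adj_mult G_herm D_skew matrix_minus_right)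
  moreover have "frobenius_sq (D ** E) = frobenius_sq (E ** D)"
    by (metis frobenius_sq_mat_adj frobenius_sq_minus mat_adj_mult E_herm D_skew matrix_minus_right)
  moreover have "frobenius_sq (E ** D) = frobenius_sq D + frobenius_sq (D ** D)"
  proof -
    have "inner ((E ** D) *v u) ((E ** D) *v u)
        = inner (D *v u) (D *v u) + inner ((D ** D) *v u) ((D ** D) *v u)" for u
      by (simp add: inner_self_mat_mult[of E] E_herm EE matrix_vector_mult_add_rdistrib inner_add_right
          matrix_vector_mul_assoc[symmetric] inner_self_mat_mult[of D "D *v u"])
    then show ?thesis by (simp add: frobenius_sq_def sum.distrib)
  qed
  moreover have "frobenius_sq ((E - K) ** D) \<le> frobenius_sq D"
    using G_contr by (rule frobenius_sq_contraction_mult)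
  ultimately have "frobenius_sq (D ** D) \<le> 0"
    using frobenius_sq_parallelogram[of "D ** E" "D ** K"] frobenius_sq_nonneg[of "D ** K"]
    unfolding GD DG frobenius_sq_minus by linarith
  then have DD: "D ** D = 0"
    using frobenius_sq_nonneg frobenius_sq_eq_0_iff by (metis order_antisym)
  have "inner (D *v u) (D *v u) = 0" for u
    by (simp add: inner_self_mat_mult D_skew matrix_minus_left DD)
  then show ?thesis
    by (simp add: matrix_eq)
qed

lemma hermitian_if_idempotent_and_hermitian_contraction:
  fixes P R G :: "complex^'n^'n"
  assumes PP: "P ** P = P" and RP: "R ** P = P ** R"
    and G: "G = P + mat_adj R - mat 1"
    and G_herm: "mat_adj G = G" and G_contr: "\<forall>u. norm (G *v u) \<le> norm u"
  shows "mat_adj P = P"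
proof -
  define D where "D = P - mat_adj P"
  define E where "E = P + mat_adj P - mat 1"
  define K where "K = P - R"
  have R: "R = G - mat_adj P + mat 1"
    using arg_cong[OF G_herm, of mat_adj] unfolding G
    by (simp add: mat_adj_add mat_adj_diff mat_adj_mat_1)
  have "E - K = mat_adj P - mat 1 + R"
    by (simp add: E_def K_def)
  also have "\<dots> = G"
    by (subst R) simp
  finally have G_split: "G = E - K" ..
  have PP': "mat_adj P ** mat_adj P = mat_adj P"
    by (metis PP mat_adj_mult)
  have KP: "K ** P = P ** K"
    by (simp add: K_def matrix_diff_ldistrib matrix_diff_rdistrib RP)
  have "mat_adj K = K"
    using G_herm unfolding G_split by (simp add: E_def mat_adj_add mat_adj_diff mat_adj_mat_1)
  then have KP': "K ** mat_adj P = mat_adj P ** K"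
    by (metis KP mat_adj_mult)
  have "D = 0"
  proof (rule skew_eq_0_if_anticommuting_square)
    show "mat_adj D = - D" "mat_adj E = E"
      by (simp_all add: D_def E_def mat_adj_add mat_adj_diff mat_adj_mat_1)
    show "E ** E = mat 1 + mat_adj D ** D" "E ** D = - (D ** E)"
      by (simp_all add: E_def D_def mat_adj_diff matrix_add_ldistrib matrix_add_rdistrib
          matrix_diff_ldistrib matrix_diff_rdistrib PP PP' algebra_simps)
    show "K ** D = D ** K"
      by (simp add: D_def matrix_diff_ldistrib matrix_diff_rdistrib KP KP')
    show "mat_adj (E - K) = E - K" "\<forall>u. norm ((E - K) *v u) \<le> norm u"
      using G_herm G_contr unfolding G_split by simp_all
  qed
  then show ?thesis by (simp add: D_def)
qed

lemma norm_le_and_orthogonal_if_norm_add_le: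
  fixes x y :: "'a::real_inner"
  assumes bound: "\<And>s. norm (x + s *\<^sub>R y) \<le> sqrt (1 + s\<^sup>2) * norm y"
  shows "norm x \<le> norm y" "inner x y = 0"
proof -
  have ineq: "inner x x + 2 * s * inner x y \<le> inner y y" for s
  proof -
    have "(norm (x + s *\<^sub>R y))\<^sup>2 \<le> (sqrt (1 + s\<^sup>2) * norm y)\<^sup>2"
      using bound[of s] by (simp add: power_mono)
    then have "inner (x + s *\<^sub>R y) (x + s *\<^sub>R y) \<le> (1 + s\<^sup>2) * inner y y"
      by (simp add: power_mult_distrib power2_norm_eq_inner)
    then show ?thesis
      by (simp add: inner_add_left inner_add_right inner_commute algebra_simps power2_eq_square)
  qed
  show "norm x \<le> norm y"
    using ineq[of 0] by (simp add: norm_eq_sqrt_inner real_sqrt_le_iff)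
  show "inner x y = 0"
  proof (rule ccontr)
    assume "inner x y \<noteq> 0"
    then have "2 * ((inner y y + 1) / (2 * inner x y)) * inner x y = inner y y + 1"
      by simp
    then show False
      using ineq[of "(inner y y + 1) / (2 * inner x y)"] inner_ge_zero[of x] by linarith
  qed
qed

lemma inner_ii_scalar_right: "inner x (\<i> *s y) = - inner (\<i> *s x) (y::complex^'n)"
  by (simp add: inner_vec_def inner_complex_eq_Re_cnj vector_scalar_mult_def sum_negf[symmetric])

lemma norm_ii_scalar: "norm (\<i> *s v) = norm (v::complex^'n)"
proof -
  have "inner (\<i> *s v) (\<i> *s v) = inner v v"
    by (simp add: inner_vec_def inner_complex_eq_Re_cnj vector_scalar_mult_def)
  then show ?thesis by (simp add: norm_eq_sqrt_inner)
qed

lemma norm_mult_vec_le_mat_opnorm: "norm ((M::complex^'n^'n) *v v) \<le> mat_opnorm M * norm v"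
  unfolding mat_opnorm_def by (rule onorm) simp

lemma hermitian_if_inner_ii_self_eq_0:
  fixes M :: "complex^'n^'n"
  assumes real_form: "\<And>v. inner (M *v v) (\<i> *s v) = 0"
  shows "mat_adj M = M"
proof -
  have antisym: "inner (M *v v) (\<i> *s w) = - inner (M *v w) (\<i> *s v)" for v w
  proof -
    have "inner (M *v (v + w)) (\<i> *s (v + w)) = 0"
      by (rule real_form)
    then show ?thesis
      using real_form[of v] real_form[of w]
      by (simp add: matrix_vector_right_distrib vector_add_ldistrib inner_add_left inner_add_right)
  qed
  have "\<i> *s (mat_adj M *v w) = \<i> *s (M *v w)" for w
  proof (rule vector_eq_ldot[THEN iffD1], rule allI)
    fix v
    have "inner v (\<i> *s (mat_adj M *v w)) = inner (M *v v) (\<i> *s w)"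
      by (simp add: inner_mat_adj vector_scalar_commute)
    also have "\<dots> = inner (\<i> *s (M *v w)) v"
      by (subst antisym) (simp only: inner_ii_scalar_right[of "M *v w"] minus_minus)
    also have "\<dots> = inner v (\<i> *s (M *v w))"
      by (rule inner_commute)
    finally show "inner v (\<i> *s (mat_adj M *v w)) = inner v (\<i> *s (M *v w))" .
  qed
  then have "mat_adj M *v w = M *v w" for w
    using arg_cong[where f = "\<lambda>x. (- \<i>) *s x"] by (simp add: vector_smult_assoc)
  then show ?thesis
    by (simp add: matrix_eq)
qed

lemma hermitian_contraction_if_norm_add_ii_le:
  fixes G :: "complex^'n^'n"
  assumes bound: "\<And>s::real. mat_opnorm (G + mat_cscale (\<i> * s) (mat 1)) \<le> sqrt (1 + s\<^sup>2)"
  shows "mat_adj G = G" "\<forall>v. norm (G *v v) \<le> norm v"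
proof -
  have "norm (G *v v + s *\<^sub>R (\<i> *s v)) \<le> sqrt (1 + s\<^sup>2) * norm (\<i> *s v)" for s v
  proof -
    have "(G + mat_cscale (\<i> * s) (mat 1)) *v v = G *v v + s *\<^sub>R (\<i> *s v)"
      by (simp add: matrix_vector_mult_add_rdistrib mat_cscale_mult_vec vec_eq_iff
          vector_scalar_mult_def) (simp add: scaleR_conv_of_real)
    then have "norm (G *v v + s *\<^sub>R (\<i> *s v))
        \<le> mat_opnorm (G + mat_cscale (\<i> * s) (mat 1)) * norm v"
      by (metis norm_mult_vec_le_mat_opnorm)
    also have "\<dots> \<le> sqrt (1 + s\<^sup>2) * norm v"
      using bound[of s] by (rule mult_right_mono) simp
    finally show ?thesis
      by (simp only: norm_ii_scalar)
  qed
  note orth = norm_le_and_orthogonal_if_norm_add_le[OF this]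
  show "\<forall>v. norm (G *v v) \<le> norm v"
    using orth(1) by (simp add: norm_ii_scalar)
  show "mat_adj G = G"
    using orth(2) by (rule hermitian_if_inner_ii_self_eq_0)
qed

lemma uniform_algebraD:
  assumes "uniform_algebra A"
  shows "(\<lambda>x. c) \<in> A"
    and "f \<in> A \<Longrightarrow> g \<in> A \<Longrightarrow> (\<lambda>x. f x + g x) \<in> A"
    and "f \<in> A \<Longrightarrow> (\<lambda>x. c * f x) \<in> A"
  using assms unfolding uniform_algebra_def by blast+

lemma continuous_unital_homD:
  assumes "continuous_unital_hom A \<theta>"
  shows "f \<in> A \<Longrightarrow> g \<in> A \<Longrightarrow> \<theta> (\<lambda>x. f x + g x) = \<theta> f + \<theta> g"
    and "f \<in> A \<Longrightarrow> \<theta> (\<lambda>x. c * f x) = mat_cscale c (\<theta> f)"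
    and "f \<in> A \<Longrightarrow> g \<in> A \<Longrightarrow> \<theta> (\<lambda>x. f x * g x) = \<theta> f ** \<theta> g"
    and "\<theta> (\<lambda>x. 1) = mat 1"
  using assms unfolding continuous_unital_hom_def by blast+

lemma unital_antilinear_contractionD:
  assumes "unital_antilinear_contraction A \<alpha>"
  shows "f \<in> A \<Longrightarrow> \<alpha> f \<in> A"
    and "f \<in> A \<Longrightarrow> g \<in> A \<Longrightarrow> \<alpha> (\<lambda>x. c * f x + g x) = (\<lambda>x. cnj c * \<alpha> f x + \<alpha> g x)"
    and "\<alpha> (\<lambda>x. 1) = (\<lambda>x. 1)"
  using assms unfolding unital_antilinear_contraction_def by blast+

lemma uniform_algebra_affine_mem:
  assumes "uniform_algebra A" and "f \<in> A"
  shows "(\<lambda>x. c * f x + k) \<in> A"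
  using uniform_algebraD(2)[OF assms(1) uniform_algebraD(3)[OF assms] uniform_algebraD(1)[OF assms(1)]]
  .

lemma continuous_unital_hom_affine:
  assumes A: "uniform_algebra A" and \<theta>: "continuous_unital_hom A \<theta>" and "f \<in> A"
  shows "\<theta> (\<lambda>x. c * f x + k) = mat_cscale c (\<theta> f) + mat_cscale k (mat 1)"
proof -
  note const = uniform_algebraD(1)[OF A]
  have "\<theta> (\<lambda>x. k) = mat_cscale k (mat 1)"
    using continuous_unital_homD(2)[OF \<theta> const[of 1], of k]
    by (simp add: continuous_unital_homD(4)[OF \<theta>])
  then show ?thesis
    using continuous_unital_homD(1)[OF \<theta> uniform_algebraD(3)[OF A \<open>f \<in> A\<close>] const]
    by (simp add: continuous_unital_homD(2)[OF \<theta> \<open>f \<in> A\<close>])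
qed

lemma antilinear_affine:
  assumes A: "uniform_algebra A" and \<alpha>: "unital_antilinear_contraction A \<alpha>" and "f \<in> A"
  shows "\<alpha> (\<lambda>x. c * f x + k) = (\<lambda>x. cnj c * \<alpha> f x + cnj k)"
proof -
  note const = uniform_algebraD(1)[OF A]
  note antilinear = unital_antilinear_contractionD(2)[OF \<alpha>]
  have "\<alpha> (\<lambda>x. 0) x = 0" for x
    using fun_cong[OF antilinear[OF const const, of 1 0 0], of x] by simp
  then have zero: "\<alpha> (\<lambda>x. 0) = (\<lambda>x. 0)"
    by (rule ext)
  have "\<alpha> (\<lambda>x. k) = (\<lambda>x. cnj k)"
    using antilinear[OF const const, of k 1 0]
    by (simp add: zero unital_antilinear_contractionD(3)[OF \<alpha>])
  then show ?thesis
    using antilinear[OF \<open>f \<in> A\<close> const, of c k] by simp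
qed

lemma theta_alpha_affine:
  assumes A: "uniform_algebra A" and \<theta>: "continuous_unital_hom A \<theta>"
    and \<alpha>: "unital_antilinear_contraction A \<alpha>" and "p \<in> A"
  shows "theta_alpha \<theta> \<alpha> (\<lambda>x. 2 * p x + k) = \<theta> p + mat_adj (\<theta> (\<alpha> p)) + mat_cscale k (mat 1)"
proof -
  have "\<alpha> p \<in> A"
    using unital_antilinear_contractionD(1)[OF \<alpha> \<open>p \<in> A\<close>] .
  then show ?thesis
    unfolding theta_alpha_def antilinear_affine[OF A \<alpha> \<open>p \<in> A\<close>]
      continuous_unital_hom_affine[OF A \<theta> \<open>p \<in> A\<close>]
      continuous_unital_hom_affine[OF A \<theta> \<open>\<alpha> p \<in> A\<close>]
    by (simp add: vec_eq_iff mat_cscale_def mat_adj_def mat_def field_simps)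
qed

lemma supnorm_idempotent_affine_le:
  assumes "\<And>x. p x * p x = p x"
  shows "supnorm (\<lambda>x. 2 * p x + (\<i> * s - 1)) \<le> sqrt (1 + s\<^sup>2)"
  unfolding supnorm_def
proof (rule cSUP_least)
  fix x
  have "p x = 0 \<or> p x = 1"
    using assms[of x] by (metis mult_cancel_right1 mult_zero_left)
  then have "2 * p x + (\<i> * s - 1) = Complex 1 s \<or> 2 * p x + (\<i> * s - 1) = Complex (-1) s"
    by (auto simp: complex_eq_iff)
  then show "cmod (2 * p x + (\<i> * s - 1)) \<le> sqrt (1 + s\<^sup>2)"
    by (auto simp: complex_norm)
qed simp

theorem theorem5p1:
  fixes A :: "('a::t2_space \<Rightarrow> complex) set"
    and \<theta> :: "('a \<Rightarrow> complex) \<Rightarrow> complex^'n^'n"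
    and \<alpha> :: "('a \<Rightarrow> complex) \<Rightarrow> ('a \<Rightarrow> complex)"
    and p :: "'a \<Rightarrow> complex"
  assumes "uniform_algebra A"
    and "continuous_unital_hom A \<theta>"
    and "unital_antilinear_contraction A \<alpha>"
    and "\<forall>f\<in>A. mat_opnorm (theta_alpha \<theta> \<alpha> f) \<le> supnorm f"
    and "p \<in> A" and "(\<lambda>x. p x * p x) = p" and "(\<lambda>x. cnj (p x)) = p"
  shows "\<theta> p ** \<theta> p = \<theta> p \<and> mat_adj (\<theta> p) = \<theta> p"
proof -
  note A = assms(1) and \<theta> = assms(2) and \<alpha> = assms(3) and p = assms(5)
  have "\<alpha> p \<in> A"
    using unital_antilinear_contractionD(1)[OF \<alpha> p] .
  have idem: "\<theta> p ** \<theta> p = \<theta> p"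
    using continuous_unital_homD(3)[OF \<theta> p p] assms(6) by simp
  have commute: "\<theta> (\<alpha> p) ** \<theta> p = \<theta> p ** \<theta> (\<alpha> p)"
    using continuous_unital_homD(3)[OF \<theta> \<open>\<alpha> p \<in> A\<close> p]
      continuous_unital_homD(3)[OF \<theta> p \<open>\<alpha> p \<in> A\<close>]
    by (simp add: mult.commute)
  define G where "G = \<theta> p + mat_adj (\<theta> (\<alpha> p)) - mat 1"
  have "mat_opnorm (G + mat_cscale (\<i> * s) (mat 1)) \<le> sqrt (1 + s\<^sup>2)" for s :: real
  proof -
    let ?f = "\<lambda>x. 2 * p x + (\<i> * s - 1)"
    have "G + mat_cscale (\<i> * s) (mat 1) = theta_alpha \<theta> \<alpha> ?f"
      by (simp add: theta_alpha_affine[OF A \<theta> \<alpha> p] G_def vec_eq_iff mat_cscale_def mat_def)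
    also have "mat_opnorm \<dots> \<le> supnorm ?f"
      using assms(4) uniform_algebra_affine_mem[OF A p] by blast
    also have "\<dots> \<le> sqrt (1 + s\<^sup>2)"
      using fun_cong[OF assms(6)] by (intro supnorm_idempotent_affine_le) simp
    finally show ?thesis .
  qed
  then have "mat_adj G = G" "\<forall>v. norm (G *v v) \<le> norm v"
    by (rule hermitian_contraction_if_norm_add_ii_le)+
  then show ?thesis
    using hermitian_if_idempotent_and_hermitian_contraction[OF idem commute G_def] idem by blast
qed

end
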